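(* There is a (unique) action of the group $W(P)$ on the set $R(P)=\prod_{i=0}^p\prod_{j=1}^{k_i}K^{l_{i,j}}$ in which each generator $\sigma_{c_t}$ ($t\in\mathcal T(P)$) acts by the map $\sigma(t)$ and each generator $\sigma_{c(i,j,s)}$ acts by $\sigma(i,j,s)$ defined below; that is, these maps satisfy all relations of $W(P)$ (in particular $\sigma(t)^2=\mathrm{id}$ and $(\sigma(t)\sigma(t'))^{m}=\mathrm{id}$ with $m=2,3,4,6$ when $-\langle c_t,c_{t'}\rangle=0,1,2,3$, and the analogous braid relations involving $\sigma(i,j,s)$).
   Context: $K$ is a field of characteristic $0$. Combinatorial data: integer $p\ge0$; positive integers $k_i$ ($0\le i\le p$) and $l_{i,j}$ ($1\le j\le k_i$); nonnegative integers $e_i(j,j')$, symmetric in $j,j'$, with $e_i(j,j)=0$ and $e_i(j,j')\ge1$ for $j\neq j'$ (in the paper $e_i(j,j')=-\mathrm{wt}_{c_i}(w_{i,j}-w_{i,j'})$ is the degree of the difference of exponential factors at the singular point $c_i$, with $c_0=\infty$). $\mathcal T(P)=\prod_{i=0}^p\{1,\dots,k_i\}$. $Q(P)$ is the free $\mathbb Z$-module on $\mathcal C=\{c_t\}_{t\in\mathcal T(P)}\cup\{c(i,j,s)\mid 1\le s\le l_{i,j}-1\}$ with symmetric form $\langle c_t,c_{t'}\rangle=-\sum_{i=0}^pe_i(t_i,t'_i)-(p-1)+\#\{i\mid t_i=t'_i\}$, $\langle c_t,c(i,j,s)\rangle=-1$ if $t_i=j,s=1$ and $0$ otherwise, $\langle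 c(i,j,s),c(i',j',s')\rangle=2$ if equal, $-1$ if $(i,j)=(i',j')$ and $|s-s'|=1$, $0$ otherwise. $W(P)$ is the group generated by the reflections $\sigma_c(\alpha)=\alpha-\langle c,\alpha\rangle c$, $c\in\mathcal C$. Maps on $R(P)$ (elements $\nu=(\nu_{i,j,s})$): for $t\in\mathcal T(P)$ put $\nu(t)=\sum_{i=0}^p\nu_{i,t_i,1}$ and $\sigma(t)\nu=\tilde\nu$ with, for $i\ge1$: $\tilde\nu_{i,t_i,1}=\nu_{i,t_i,1}$, and $\tilde\nu_{i,j,s}=\nu_{i,j,s}-(e_i(j,t_i)+1)(1-\nu(t))$ for all other $(j,s)$; for $i=0$: $\tilde\nu_{0,t_0,1}=\nu_{0,t_0,1}+2(1-\nu(t))$, and $\tilde\nu_{0,j,s}=\nu_{0,j,s}-(e_0(j,t_0)-1)(1-\nu(t))$ for all other $(j,s)$. For $1\le s\le l_{i,j}-1$, $\sigma(i,j,s)$ swaps $\nu_{i,j,s}$ and $\nu_{i,j,s+1}$. *)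

theory Defs
  imports "HOL-Analysis.Analysis" "HOL-Library.FuncSet"
begin

definition valid_data :: "nat \<Rightarrow> (nat \<Rightarrow> nat) \<Rightarrow> (nat \<Rightarrow> nat \<Rightarrow> nat) \<Rightarrow> (nat \<Rightarrow> nat \<Rightarrow> nat \<Rightarrow> nat) \<Rightarrow> bool" where
  "valid_data p k l e \<longleftrightarrow>
     (\<forall>i\<le>p. 1 \<le> k i) \<and>
     (\<forall>i\<le>p. \<forall>j\<in>{1..k i}. 1 \<le> l i j) \<and>
     (\<forall>i\<le>p. \<forall>j\<in>{1..k i}. \<forall>j'\<in>{1..k i}. e i j j' = e i j' j) \<and>
     (\<forall>i\<le>p. \<forall>j\<in>{1..k i}. e i j j = 0) \<and>
     (\<forall>i\<le>p. \<forall>j\<in>{1..k i}. \<forall>j'\<in>{1..k i}. j \<noteq> j' \<longrightarrow> 1 \<le> e i j j')"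

text \<open>T(P) = prod_{i=0}^p {1..k_i}, as extensional functions (value 0 for i > p).\<close>
definition TP :: "nat \<Rightarrow> (nat \<Rightarrow> nat) \<Rightarrow> (nat \<Rightarrow> nat) set" where
  "TP p k = {t. (\<forall>i\<le>p. 1 \<le> t i \<and> t i \<le> k i) \<and> (\<forall>i>p. t i = 0)}"

text \<open>Names of basis elements of Q(P): CT t is c_t, CR i j s is c(i,j,s).\<close>
datatype gen = CT "nat \<Rightarrow> nat" | CR nat nat nat

definition CP :: "nat \<Rightarrow> (nat \<Rightarrow> nat) \<Rightarrow> (nat \<Rightarrow> nat \<Rightarrow> nat) \<Rightarrow> gen set" where
  "CP p k l = CT ` TP p k \<union>
     {CR i j s | i j s. i \<le> p \<and> 1 \<le> j \<and> j \<le> k i \<and> 1 \<le> s \<and> s \<le> l i j - 1}"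

fun pairing :: "nat \<Rightarrow> (nat \<Rightarrow> nat \<Rightarrow> nat \<Rightarrow> nat) \<Rightarrow> gen \<Rightarrow> gen \<Rightarrow> int" where
  "pairing p e (CT t) (CT t') =
     - (\<Sum>i\<le>p. int (e i (t i) (t' i))) - (int p - 1) + int (card {i. i \<le> p \<and> t i = t' i})"
| "pairing p e (CT t) (CR i j s) = (if t i = j \<and> s = 1 then -1 else 0)"
| "pairing p e (CR i j s) (CT t) = (if t i = j \<and> s = 1 then -1 else 0)"
| "pairing p e (CR i j s) (CR i' j' s') =
     (if (i, j, s) = (i', j', s') then 2
      else if (i, j) = (i', j') \<and> (s = s' + 1 \<or> s' = s + 1) then -1 else 0)"

text \<open>Q(P): the free Z-module on CP, as integer-valued functions supported on CP.\<close>
definition QP :: "nat \<Rightarrow> (nat \<Rightarrow> nat) \<Rightarrow> (nat \<Rightarrow> nat \<Rightarrow> nat) \<Rightarrow> (gen \<Rightarrow> int) set" where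
  "QP p k l = {\<alpha>. \<forall>d. d \<notin> CP p k l \<longrightarrow> \<alpha> d = 0}"

definition pairQ :: "nat \<Rightarrow> (nat \<Rightarrow> nat) \<Rightarrow> (nat \<Rightarrow> nat \<Rightarrow> nat) \<Rightarrow> (nat \<Rightarrow> nat \<Rightarrow> nat \<Rightarrow> nat)
     \<Rightarrow> gen \<Rightarrow> (gen \<Rightarrow> int) \<Rightarrow> int" where
  "pairQ p k l e c \<alpha> = (\<Sum>c'\<in>CP p k l. \<alpha> c' * pairing p e c c')"

definition reflQ :: "nat \<Rightarrow> (nat \<Rightarrow> nat) \<Rightarrow> (nat \<Rightarrow> nat \<Rightarrow> nat) \<Rightarrow> (nat \<Rightarrow> nat \<Rightarrow> nat \<Rightarrow> nat)
     \<Rightarrow> gen \<Rightarrow> (gen \<Rightarrow> int) \<Rightarrow> (gen \<Rightarrow> int)" where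
  "reflQ p k l e c \<alpha> = (\<lambda>d. \<alpha> d - pairQ p k l e c \<alpha> * (if d = c then 1 else 0))"

definition wordQ :: "nat \<Rightarrow> (nat \<Rightarrow> nat) \<Rightarrow> (nat \<Rightarrow> nat \<Rightarrow> nat) \<Rightarrow> (nat \<Rightarrow> nat \<Rightarrow> nat \<Rightarrow> nat)
     \<Rightarrow> gen list \<Rightarrow> (gen \<Rightarrow> int) \<Rightarrow> (gen \<Rightarrow> int)" where
  "wordQ p k l e ws = restrict (foldr (\<lambda>c f. reflQ p k l e c \<circ> f) ws id) (QP p k l)"

definition WP :: "nat \<Rightarrow> (nat \<Rightarrow> nat) \<Rightarrow> (nat \<Rightarrow> nat \<Rightarrow> nat) \<Rightarrow> (nat \<Rightarrow> nat \<Rightarrow> nat \<Rightarrow> nat)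
     \<Rightarrow> ((gen \<Rightarrow> int) \<Rightarrow> (gen \<Rightarrow> int)) set" where
  "WP p k l e = wordQ p k l e ` lists (CP p k l)"

definition vidx :: "nat \<Rightarrow> (nat \<Rightarrow> nat) \<Rightarrow> (nat \<Rightarrow> nat \<Rightarrow> nat) \<Rightarrow> nat \<Rightarrow> nat \<Rightarrow> nat \<Rightarrow> bool" where
  "vidx p k l i j s \<longleftrightarrow> i \<le> p \<and> 1 \<le> j \<and> j \<le> k i \<and> 1 \<le> s \<and> s \<le> l i j"

definition RP :: "nat \<Rightarrow> (nat \<Rightarrow> nat) \<Rightarrow> (nat \<Rightarrow> nat \<Rightarrow> nat) \<Rightarrow> (nat \<Rightarrow> nat \<Rightarrow> nat \<Rightarrow> 'k::field) set" where
  "RP p k l = {\<nu>. \<forall>i j s. \<not> vidx p k l i j s \<longrightarrow> \<nu> i j s = 0}"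

definition nu_t :: "nat \<Rightarrow> (nat \<Rightarrow> nat \<Rightarrow> nat \<Rightarrow> 'k::field) \<Rightarrow> (nat \<Rightarrow> nat) \<Rightarrow> 'k" where
  "nu_t p \<nu> t = (\<Sum>i\<le>p. \<nu> i (t i) 1)"

fun actR :: "nat \<Rightarrow> (nat \<Rightarrow> nat) \<Rightarrow> (nat \<Rightarrow> nat \<Rightarrow> nat) \<Rightarrow> (nat \<Rightarrow> nat \<Rightarrow> nat \<Rightarrow> nat)
     \<Rightarrow> gen \<Rightarrow> (nat \<Rightarrow> nat \<Rightarrow> nat \<Rightarrow> 'k::field) \<Rightarrow> (nat \<Rightarrow> nat \<Rightarrow> nat \<Rightarrow> 'k)" where
  "actR p k l e (CT t) \<nu> =
     (\<lambda>i j s. if vidx p k l i j s then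
        (if i = 0 then
           (if j = t 0 \<and> s = 1 then \<nu> i j s + 2 * (1 - nu_t p \<nu> t)
            else \<nu> i j s - (of_nat (e 0 j (t 0)) - 1) * (1 - nu_t p \<nu> t))
         else
           (if j = t i \<and> s = 1 then \<nu> i j s
            else \<nu> i j s - (of_nat (e i j (t i)) + 1) * (1 - nu_t p \<nu> t)))
      else \<nu> i j s)"
| "actR p k l e (CR i j s) \<nu> =
     (\<lambda>i' j' s'. if i' = i \<and> j' = j \<and> s' = s then \<nu> i j (s + 1)
                else if i' = i \<and> j' = j \<and> s' = s + 1 then \<nu> i j s
                else \<nu> i' j' s')"

definition wordR :: "nat \<Rightarrow> (nat \<Rightarrow> nat) \<Rightarrow> (nat \<Rightarrow> nat \<Rightarrow> nat) \<Rightarrow> (nat \<Rightarrow> nat \<Rightarrow> nat \<Rightarrow> nat)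
     \<Rightarrow> gen list \<Rightarrow> (nat \<Rightarrow> nat \<Rightarrow> nat \<Rightarrow> 'k::field) \<Rightarrow> (nat \<Rightarrow> nat \<Rightarrow> nat \<Rightarrow> 'k)" where
  "wordR p k l e ws = restrict (foldr (\<lambda>c f. actR p k l e c \<circ> f) ws id) (RP p k l)"

end

theory Submission
  imports Defs "Jordan_Normal_Form.Determinant"
begin

(* For a finite set C with a symmetric integer matrix A (diagonal 2,
   off-diagonal entries <= 0) consider the reflections of the free module on C, and any
   action of C on a set X by involutions that commute when A c d = 0 and satisfy the braid
   relation when A c d = -1.  Then every word acting trivially on the module acts trivially
   on X.  The proof is Tits' argument: among words equivalent for both actions choose one of
   minimal length; a determinant gives a sign character, a rank-two computation (where pairs
   with A c d <= -2 generate infinite dihedral groups) and an induction on the length show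
   that a reduced word w with ascent s maps the simple root of s to a nonnegative vector;
   a nonempty reduced word acting trivially on the module then yields a contradiction.

   Both the reflections of Q(P) and the maps sigma(c) on R(P) are affine
   "pseudo-reflections" x |-> x + lambda_c(x) v_c with lambda_d(v_c) = -A c d, A = <.,.>;
   this gives the required relations, and the data P gives such a matrix. *)

definition word_action :: "('c \<Rightarrow> 'x \<Rightarrow> 'x) \<Rightarrow> 'c list \<Rightarrow> 'x \<Rightarrow> 'x" where
  "word_action f ws = foldr (\<lambda>c g. f c \<circ> g) ws id"

lemma word_action_Nil [simp]: "word_action f [] = id"
  by (simp add: word_action_def)

lemma word_action_Cons [simp]: "word_action f (c # ws) = f c \<circ> word_action f ws"
  by (simp add: word_action_def)

lemma word_action_append [simp]: "word_action f (ws @ us) = word_action f ws \<circ> word_action f us"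
  by (induction ws) auto

lemma word_action_closed:
  assumes closed: "\<And>c x. c \<in> C \<Longrightarrow> x \<in> X \<Longrightarrow> f c x \<in> X"
  shows "ws \<in> lists C \<Longrightarrow> x \<in> X \<Longrightarrow> word_action f ws x \<in> X"
proof (induction ws)
  case (Cons c ws)
  then show ?case by (simp add: closed)
qed simp

lemma word_action_rev:
  assumes closed: "\<And>c x. c \<in> C \<Longrightarrow> x \<in> X \<Longrightarrow> f c x \<in> X"
    and invol: "\<And>c x. c \<in> C \<Longrightarrow> x \<in> X \<Longrightarrow> f c (f c x) = x"
  shows "ws \<in> lists C \<Longrightarrow> x \<in> X \<Longrightarrow> word_action f (rev ws) (word_action f ws x) = x"
proof (induction ws arbitrary: x)
  case (Cons c ws)
  have "word_action f ws x \<in> X" using Cons.prems word_action_closed[of C X f, OF closed] by simp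
  then have "f c (f c (word_action f ws x)) = word_action f ws x" using Cons.prems by (simp add: invol)
  then show ?case using Cons by simp
qed simp

section \<open>Affine pseudo-reflections\<close>

text \<open>Maps of the form x |-> x + lambda_c(x) v_c, where adding multiples of vectors is modelled by
  an abstract operation comb x a v ("x + a v") and lambda_d(x + a v_c) = lambda_d(x) - a A(c,d).\<close>
locale affine_reflections =
  fixes act :: "'c \<Rightarrow> 'v \<Rightarrow> 'v" and lam :: "'c \<Rightarrow> 'v \<Rightarrow> 'r::comm_ring_1"
    and vec :: "'c \<Rightarrow> 'v" and comb :: "'v \<Rightarrow> 'r \<Rightarrow> 'v \<Rightarrow> 'v"
    and A :: "'c \<Rightarrow> 'c \<Rightarrow> 'r" and C :: "'c set"
  assumes act_eq: "c \<in> C \<Longrightarrow> act c x = comb x (lam c x) (vec c)"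
    and lam_comb: "c \<in> C \<Longrightarrow> d \<in> C \<Longrightarrow> lam d (comb x a (vec c)) = lam d x - a * A c d"
    and comb_comm: "comb (comb x a u) b v = comb (comb x b v) a u"
    and comb_add: "comb (comb x a u) b u = comb x (a + b) u"
    and comb_0: "comb x 0 u = x"
    and A_diag: "c \<in> C \<Longrightarrow> A c c = 2"
    and A_sym: "c \<in> C \<Longrightarrow> d \<in> C \<Longrightarrow> A c d = A d c"
begin

lemma invol: assumes c: "c \<in> C" shows "act c (act c x) = x"
proof -
  have "act c (act c x) = comb (comb x (lam c x) (vec c)) (lam c x - lam c x * 2) (vec c)"
    using c by (simp add: act_eq lam_comb A_diag)
  also have "\<dots> = x" by (simp add: comb_add comb_0)
  finally show ?thesis .
qed

lemma commute:
  assumes "c \<in> C" "d \<in> C" "A c d = 0"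
  shows "act c (act d x) = act d (act c x)"
  using assms A_sym[of c d] by (simp add: act_eq lam_comb comb_comm)

lemma braid:
  assumes c: "c \<in> C" and d: "d \<in> C" and cd: "A c d = -1"
  shows "act c (act d (act c x)) = act d (act c (act d x))"
proof -
  define a b where "a = lam c x" and "b = lam d x"
  have dc: "A d c = -1" using cd A_sym c d by simp
  have "act c (act d (act c x)) = comb (comb (comb x a (vec c)) (b + a) (vec d)) b (vec c)"
    using c d cd dc A_diag[OF c] A_diag[OF d] by (simp add: act_eq lam_comb a_def b_def algebra_simps)
  also have "\<dots> = comb (comb x (a + b) (vec c)) (a + b) (vec d)"
    by (metis add.commute comb_add comb_comm)
  also have "\<dots> = comb (comb (comb x b (vec d)) (a + b) (vec c)) a (vec d)"
    by (metis add.commute comb_add comb_comm)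
  also have "\<dots> = act d (act c (act d x))"
    using c d cd dc A_diag[OF c] A_diag[OF d] by (simp add: act_eq lam_comb a_def b_def algebra_simps)
  finally show ?thesis .
qed

end

locale cartan_matrix =
  fixes C :: "'c set" and A :: "'c \<Rightarrow> 'c \<Rightarrow> int"
  assumes finite_C: "finite C"
    and A_diag: "c \<in> C \<Longrightarrow> A c c = 2"
    and A_sym: "c \<in> C \<Longrightarrow> d \<in> C \<Longrightarrow> A c d = A d c"
    and A_nonpos: "c \<in> C \<Longrightarrow> d \<in> C \<Longrightarrow> c \<noteq> d \<Longrightarrow> A c d \<le> 0"
begin

definition root_lattice :: "('c \<Rightarrow> int) set" where
  "root_lattice = {\<alpha>. \<forall>d. d \<notin> C \<longrightarrow> \<alpha> d = 0}"

definition root :: "'c \<Rightarrow> 'c \<Rightarrow> int" where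
  "root c = (\<lambda>d. if d = c then 1 else 0)"

definition cpair :: "'c \<Rightarrow> ('c \<Rightarrow> int) \<Rightarrow> int" where
  "cpair c \<alpha> = (\<Sum>d\<in>C. \<alpha> d * A c d)"

definition reflect :: "'c \<Rightarrow> ('c \<Rightarrow> int) \<Rightarrow> ('c \<Rightarrow> int)" where
  "reflect c \<alpha> = (\<lambda>d. \<alpha> d - cpair c \<alpha> * (if d = c then 1 else 0))"

abbreviation wQ :: "'c list \<Rightarrow> ('c \<Rightarrow> int) \<Rightarrow> ('c \<Rightarrow> int)" where
  "wQ \<equiv> word_action reflect"

lemma root_in_lattice: "c \<in> C \<Longrightarrow> root c \<in> root_lattice"
  by (simp add: root_lattice_def root_def)

lemma reflect_closed: "c \<in> C \<Longrightarrow> \<alpha> \<in> root_lattice \<Longrightarrow> reflect c \<alpha> \<in> root_lattice"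
  by (auto simp: root_lattice_def reflect_def)

lemma wQ_closed: "ws \<in> lists C \<Longrightarrow> \<alpha> \<in> root_lattice \<Longrightarrow> wQ ws \<alpha> \<in> root_lattice"
  by (rule word_action_closed[OF reflect_closed])

lemma cpair_root:
  assumes "d \<in> C"
  shows "cpair c (root d) = A c d"
proof -
  have "cpair c (root d) = (\<Sum>x\<in>C. if x = d then A c x else 0)"
    unfolding cpair_def root_def by (intro sum.cong) auto
  then show ?thesis using assms finite_C by (simp add: sum.delta')
qed

lemma cpair_lin: "cpair c (\<lambda>d. a * \<alpha> d + b * \<beta> d) = a * cpair c \<alpha> + b * cpair c \<beta>"
  by (simp add: cpair_def algebra_simps sum.distrib sum_distrib_left)

lemma reflect_lin:
  "reflect c (\<lambda>d. a * \<alpha> d + b * \<beta> d) = (\<lambda>x. a * reflect c \<alpha> x + b * reflect c \<beta> x)"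
  by (simp add: reflect_def cpair_lin fun_eq_iff algebra_simps)

lemma wQ_lin: "wQ ws (\<lambda>d. a * \<alpha> d + b * \<beta> d) = (\<lambda>x. a * wQ ws \<alpha> x + b * wQ ws \<beta> x)"
  by (induction ws) (simp_all add: reflect_lin)

lemma wQ_uminus: "wQ ws (\<lambda>d. - \<alpha> d) = (\<lambda>d. - wQ ws \<alpha> d)"
  using wQ_lin[of ws "-1" \<alpha> 0 \<alpha>] by simp

lemma reflect_affine:
  "affine_reflections reflect (\<lambda>c \<alpha>. - cpair c \<alpha>) root (\<lambda>\<alpha> a u. \<lambda>x. \<alpha> x + a * u x) A C"
proof
  fix c d x a assume "c \<in> C" "d \<in> C"
  then show "- cpair d (\<lambda>y. x y + a * root c y) = - cpair d x - a * A c d"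
    using cpair_lin[of d 1 x a "root c"] by (simp add: cpair_root A_sym)
qed (auto simp: reflect_def root_def fun_eq_iff algebra_simps A_diag A_sym)

lemma reflect_invol: "c \<in> C \<Longrightarrow> reflect c (reflect c \<alpha>) = \<alpha>"
  by (rule affine_reflections.invol[OF reflect_affine])

lemma wQ_rev: "ws \<in> lists C \<Longrightarrow> \<alpha> \<in> root_lattice \<Longrightarrow> wQ (rev ws) (wQ ws \<alpha>) = \<alpha>"
  by (rule word_action_rev[OF reflect_closed reflect_invol])

lemma reflect_plane:
  assumes s: "s \<in> C" and t: "t \<in> C"
  shows "reflect s (\<lambda>d. a * root s d + b * root t d) = (\<lambda>d. (- a - b * A s t) * root s d + b * root t d)"
    and "reflect t (\<lambda>d. a * root s d + b * root t d) = (\<lambda>d. a * root s d + (- b - a * A s t) * root t d)"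
  using s t
  by (simp_all add: reflect_def cpair_lin cpair_root A_diag A_sym)
    (auto simp: fun_eq_iff algebra_simps root_def)

lemma reflect_expand:
  assumes "\<alpha> \<in> root_lattice"
  shows "reflect c \<alpha> x = (\<Sum>d\<in>C. \<alpha> d * reflect c (root d) x)"
proof -
  have expand: "(\<Sum>d\<in>C. \<alpha> d * root d x) = \<alpha> x"
    using assms finite_C by (auto simp: root_def root_lattice_def if_distrib sum.delta' cong: if_cong)
  have "(\<Sum>d\<in>C. \<alpha> d * reflect c (root d) x)
      = (\<Sum>d\<in>C. \<alpha> d * root d x) - (\<Sum>d\<in>C. \<alpha> d * A c d) * (if x = c then 1 else 0)"
    by (simp add: reflect_def cpair_root sum_subtractf algebra_simps sum_distrib_right)
  then show ?thesis by (simp add: expand reflect_def cpair_def)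
qed

end

section \<open>A sign character via determinants\<close>

text \<open>A square matrix that agrees with the identity outside row i has determinant M(i,i):
  every non-identity permutation meets a non-diagonal position outside row i.\<close>
lemma det_identity_except_row:
  fixes M :: "'a::comm_ring_1 mat"
  assumes M: "M \<in> carrier_mat n n" and i: "i < n"
    and rows: "\<And>a b. a < n \<Longrightarrow> b < n \<Longrightarrow> a \<noteq> i \<Longrightarrow> M $$ (a, b) = (if a = b then 1 else 0)"
  shows "det M = M $$ (i, i)"
proof -
  let ?U = "{0..<n}"
  let ?term = "\<lambda>q. signof q * (\<Prod>a = 0..<n. M $$ (a, q a))"
  have vanish: "?term q = 0" if q: "q permutes ?U" "q \<noteq> id" for q
  proof -
    obtain j where j: "q j \<noteq> j" using q(2) by (auto simp: fun_eq_iff)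
    have jU: "j \<in> ?U" using j q(1) by (meson permutes_not_in)
    have "\<exists>a\<in>?U. a \<noteq> i \<and> q a \<noteq> a"
    proof (cases "j = i")
      case True
      have "q i \<in> ?U" using q(1) jU True by (simp add: permutes_in_image)
      moreover have "q (q i) \<noteq> q i" using j True by (metis permutes_inj[OF q(1)] injD)
      ultimately show ?thesis using j True by (metis)
    qed (use j jU in blast)
    then obtain a where a: "a \<in> ?U" "a \<noteq> i" "q a \<noteq> a" by blast
    have "q a \<in> ?U" using q(1) a by (simp add: permutes_in_image)
    then have "M $$ (a, q a) = 0" using a rows by auto
    then have "(\<Prod>a = 0..<n. M $$ (a, q a)) = 0" using a(1) by (intro prod_zero) auto
    then show ?thesis by simp
  qed
  have fin: "finite {q. q permutes ?U}" by (rule finite_permutations) simp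
  have "det M = (\<Sum>q\<in>{q. q permutes ?U}. ?term q)" by (rule det_def'[OF M])
  also have "\<dots> = ?term id + (\<Sum>q\<in>{q. q permutes ?U} - {id}. ?term q)"
    using fin by (intro sum.remove) (auto simp: permutes_id)
  also have "(\<Sum>q\<in>{q. q permutes ?U} - {id}. ?term q) = 0"
    using vanish by (intro sum.neutral) blast
  also have "(\<Prod>a = 0..<n. M $$ (a, id a)) = (\<Prod>a = 0..<n. if a = i then M $$ (i, i) else 1)"
    using rows by (intro prod.cong) auto
  also have "\<dots> = M $$ (i, i)" using i by simp
  finally show ?thesis by (simp add: sign_id)
qed

locale enumerated_cartan_matrix = cartan_matrix C A for C :: "'c set" and A +
  fixes cs :: "'c list"
  assumes cs_distinct: "distinct cs" and cs_set: "set cs = C"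
begin

abbreviation "N \<equiv> length cs"

definition matrix_of :: "(('c \<Rightarrow> int) \<Rightarrow> ('c \<Rightarrow> int)) \<Rightarrow> int mat" where
  "matrix_of F = mat N N (\<lambda>(a, b). F (root (cs ! b)) (cs ! a))"

lemma matrix_of_carrier: "matrix_of F \<in> carrier_mat N N"
  by (simp add: matrix_of_def)

lemma cs_nth: "i < N \<Longrightarrow> cs ! i \<in> C"
  using cs_set nth_mem by blast

lemma root_nth: "a < N \<Longrightarrow> b < N \<Longrightarrow> root (cs ! b) (cs ! a) = (if a = b then 1 else 0)"
  by (simp add: root_def nth_eq_iff_index_eq[OF cs_distinct])

lemma matrix_of_comp:
  assumes c: "c \<in> C" and G: "\<And>b. b < N \<Longrightarrow> G (root (cs ! b)) \<in> root_lattice"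
  shows "matrix_of (reflect c \<circ> G) = matrix_of (reflect c) * matrix_of G"
proof (rule eq_matI)
  fix a b assume "a < dim_row (matrix_of (reflect c) * matrix_of G)"
    "b < dim_col (matrix_of (reflect c) * matrix_of G)"
  then have ab: "a < N" "b < N" by (auto simp: matrix_of_def)
  have bij: "bij_betw ((!) cs) {0..<N} C"
    using bij_betw_nth[OF cs_distinct] cs_set by (simp add: atLeast0LessThan)
  have "(matrix_of (reflect c) * matrix_of G) $$ (a, b)
      = (\<Sum>i\<in>{0..<N}. reflect c (root (cs ! i)) (cs ! a) * G (root (cs ! b)) (cs ! i))"
    using ab by (simp add: matrix_of_def scalar_prod_def)
  also have "\<dots> = (\<Sum>d\<in>C. reflect c (root d) (cs ! a) * G (root (cs ! b)) d)"
    using sum.reindex_bij_betw[OF bij] by simp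
  also have "\<dots> = reflect c (G (root (cs ! b))) (cs ! a)"
    using reflect_expand[OF G[OF ab(2)]] by (simp add: mult.commute)
  finally show "matrix_of (reflect c \<circ> G) $$ (a, b) = (matrix_of (reflect c) * matrix_of G) $$ (a, b)"
    using ab by (simp add: matrix_of_def)
qed (auto simp: matrix_of_def)

lemma det_reflect: assumes c: "c \<in> C" shows "det (matrix_of (reflect c)) = -1"
proof -
  obtain i where i: "i < N" "cs ! i = c" using c cs_set by (metis in_set_conv_nth)
  have entry: "matrix_of (reflect c) $$ (a, b)
      = (if a = b then 1 else 0) - (if a = i then A c (cs ! b) else 0)" if "a < N" "b < N" for a b
    using that i nth_eq_iff_index_eq[OF cs_distinct, of a i]
    by (simp add: matrix_of_def reflect_def cpair_root cs_nth root_nth)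
  have "det (matrix_of (reflect c)) = matrix_of (reflect c) $$ (i, i)"
    using entry i by (intro det_identity_except_row[OF matrix_of_carrier]) auto
  also have "\<dots> = -1" using entry[OF i(1) i(1)] i A_diag[OF c] by simp
  finally show ?thesis .
qed

lemma det_wQ: "ws \<in> lists C \<Longrightarrow> det (matrix_of (wQ ws)) = (-1) ^ length ws"
proof (induction ws)
  case Nil
  have "matrix_of (\<lambda>\<alpha>. \<alpha>) = 1\<^sub>m N"
    by (rule eq_matI) (auto simp: matrix_of_def root_nth)
  then show ?case by simp
next
  case (Cons c ws)
  have "matrix_of (wQ (c # ws)) = matrix_of (reflect c) * matrix_of (wQ ws)"
    using Cons.prems by (auto intro!: matrix_of_comp wQ_closed root_in_lattice cs_nth)
  then have "det (matrix_of (wQ (c # ws))) = det (matrix_of (reflect c)) * det (matrix_of (wQ ws))"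
    by (simp only: det_mult[OF matrix_of_carrier matrix_of_carrier])
  then show ?case using Cons det_reflect by (simp del: word_action_Cons)
qed

end

context cartan_matrix
begin

text \<open>The determinant is a sign character: words acting alike have lengths of equal parity.\<close>
lemma parity:
  assumes "ws \<in> lists C" "us \<in> lists C" and same: "\<forall>\<alpha>\<in>root_lattice. wQ ws \<alpha> = wQ us \<alpha>"
  shows "even (length ws) = even (length us)"
proof -
  obtain cs where "distinct cs" "set cs = C"
    using finite_distinct_list[OF finite_C] by metis
  then interpret enumerated_cartan_matrix C A cs by unfold_locales
  have "matrix_of (wQ ws) = matrix_of (wQ us)"
    unfolding matrix_of_def using same root_in_lattice cs_nth by (intro eq_matI) auto
  then have "(-1::int) ^ length ws = (-1) ^ length us" using det_wQ assms by metis
  then show ?thesis by (metis neg_one_even_power neg_one_odd_power one_neq_neg_one)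
qed

end

section \<open>Rank two\<close>

text \<open>The alternating word ... s t s t of length n, ending in t.\<close>
fun alt :: "'c \<Rightarrow> 'c \<Rightarrow> nat \<Rightarrow> 'c list" where
  "alt s t 0 = []"
| "alt s t (Suc n) = (if even n then t else s) # alt s t n"

lemma alt_snoc: "alt s t (Suc n) = alt t s n @ [t]"
  by (induction n arbitrary: s t) auto

lemma length_alt [simp]: "length (alt s t n) = n"
  by (induction n) auto

text \<open>The sequence u_0 = 0, u_1 = 1, u_(n+2) = c u_(n+1) - u_n (Chebyshev polynomials of the second
  kind at c/2); for c >= 2 it is nonnegative and nondecreasing.\<close>
fun cheb :: "int \<Rightarrow> nat \<Rightarrow> int" where
  "cheb c 0 = 0"
| "cheb c (Suc 0) = 1"
| "cheb c (Suc (Suc n)) = c * cheb c (Suc n) - cheb c n"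

lemma cheb_mono: "2 \<le> c \<Longrightarrow> 0 \<le> cheb c n \<and> cheb c n \<le> cheb c (Suc n)"
proof (induction n rule: nat_less_induct)
  case (1 n)
  show ?case
  proof (cases n)
    case (Suc m)
    then have ih: "0 \<le> cheb c m \<and> cheb c m \<le> cheb c (Suc m)" using 1 by auto
    have "c * cheb c (Suc m) \<ge> 2 * cheb c (Suc m)" using 1(2) ih by (intro mult_right_mono) auto
    then show ?thesis using Suc ih by auto
  qed simp
qed

lemma cheb_nonneg:
  assumes "2 \<le> c \<or> c = 0 \<and> n \<le> 1 \<or> c = 1 \<and> n \<le> 2"
  shows "0 \<le> cheb c n \<and> 0 \<le> cheb c (Suc n)"
proof -
  consider "2 \<le> c" | "c = 0" "n = 0 \<or> n = 1" | "c = 1" "n = 0 \<or> n = 1 \<or> n = 2"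
    using assms by linarith
  then show ?thesis
  proof cases
    case 1
    then show ?thesis using cheb_mono[OF 1, of n] by auto
  qed (auto simp: numeral_2_eq_2)
qed

context cartan_matrix
begin

lemma wQ_alt:
  assumes s: "s \<in> C" and t: "t \<in> C" and c: "A s t = - c"
  shows "wQ (alt s t n) (root s) = (if even n then (\<lambda>d. cheb c (n+1) * root s d + cheb c n * root t d)
      else (\<lambda>d. cheb c n * root s d + cheb c (n+1) * root t d))"
proof (induction n)
  case 0
  then show ?case by (simp add: fun_eq_iff root_def)
next
  case (Suc n)
  show ?case
  proof (cases "even n")
    case True
    have "wQ (alt s t (Suc n)) (root s) = reflect t (\<lambda>d. cheb c (n+1) * root s d + cheb c n * root t d)"
      using True Suc.IH by simp
    also have "\<dots> = (\<lambda>d. cheb c (n+1) * root s d + (- cheb c n - cheb c (n+1) * A s t) * root t d)"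
      by (rule reflect_plane(2)[OF s t])
    also have "\<dots> = (\<lambda>d. cheb c (Suc n) * root s d + cheb c (Suc n + 1) * root t d)"
      using c by (simp add: algebra_simps)
    finally show ?thesis using True by simp
  next
    case False
    have "wQ (alt s t (Suc n)) (root s) = reflect s (\<lambda>d. cheb c n * root s d + cheb c (n+1) * root t d)"
      using False Suc.IH by simp
    also have "\<dots> = (\<lambda>d. (- cheb c n - cheb c (n+1) * A s t) * root s d + cheb c (n+1) * root t d)"
      by (rule reflect_plane(1)[OF s t])
    also have "\<dots> = (\<lambda>d. cheb c (Suc n + 1) * root s d + cheb c (Suc n) * root t d)"
      using c by (simp add: algebra_simps)
    finally show ?thesis using False by simp
  qed
qed

end

locale cartan_action = cartan_matrix C A for C :: "'c set" and A +
  fixes act :: "'c \<Rightarrow> 'x \<Rightarrow> 'x" and X :: "'x set"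
  assumes act_closed: "c \<in> C \<Longrightarrow> x \<in> X \<Longrightarrow> act c x \<in> X"
    and act_invol: "c \<in> C \<Longrightarrow> x \<in> X \<Longrightarrow> act c (act c x) = x"
    and act_commute: "c \<in> C \<Longrightarrow> d \<in> C \<Longrightarrow> A c d = 0 \<Longrightarrow> x \<in> X \<Longrightarrow>
       act c (act d x) = act d (act c x)"
    and act_braid: "c \<in> C \<Longrightarrow> d \<in> C \<Longrightarrow> A c d = -1 \<Longrightarrow> x \<in> X \<Longrightarrow>
       act c (act d (act c x)) = act d (act c (act d x))"
begin

abbreviation wX :: "'c list \<Rightarrow> 'x \<Rightarrow> 'x" where
  "wX \<equiv> word_action act"

definition eqv :: "'c list \<Rightarrow> 'c list \<Rightarrow> bool" where
  "eqv ws us \<longleftrightarrow> (\<forall>\<alpha>\<in>root_lattice. wQ ws \<alpha> = wQ us \<alpha>) \<and> (\<forall>x\<in>X. wX ws x = wX us x)"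

lemma eqv_refl [simp]: "eqv w w"
  by (simp add: eqv_def)

lemma eqv_sym: "eqv a b \<Longrightarrow> eqv b a"
  by (simp add: eqv_def)

lemma eqv_trans: "eqv a b \<Longrightarrow> eqv b c \<Longrightarrow> eqv a c"
  by (simp add: eqv_def)

lemma eqv_append_right: "eqv a b \<Longrightarrow> c \<in> lists C \<Longrightarrow> eqv (a @ c) (b @ c)"
  by (simp add: eqv_def wQ_closed word_action_closed[OF act_closed])

lemma eqv_append_left: "eqv a b \<Longrightarrow> eqv (c @ a) (c @ b)"
  by (simp add: eqv_def)

lemma eqv_cancel: "s \<in> C \<Longrightarrow> b \<in> lists C \<Longrightarrow> eqv (a @ [s, s] @ b) (a @ b)"
  using eqv_append_left[OF eqv_append_right, of "[s, s]" "[]" b a]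
  by (simp add: eqv_def reflect_invol act_invol)

lemma eqv_commute:
  assumes "s \<in> C" "t \<in> C" "A s t = 0"
  shows "eqv [s, t] [t, s]"
  using affine_reflections.commute[OF reflect_affine assms] act_commute[OF assms]
  by (simp add: eqv_def)

lemma eqv_braid:
  assumes "s \<in> C" "t \<in> C" "A s t = -1"
  shows "eqv [s, t, s] [t, s, t]"
  using affine_reflections.braid[OF reflect_affine assms] act_braid[OF assms]
  by (simp add: eqv_def)

lemma eqv_parity: "eqv a b \<Longrightarrow> a \<in> lists C \<Longrightarrow> b \<in> lists C \<Longrightarrow> even (length a) = even (length b)"
  by (intro parity) (simp_all add: eqv_def)

definition reduced_in :: "'c set \<Rightarrow> 'c list \<Rightarrow> bool" where
  "reduced_in S w \<longleftrightarrow> w \<in> lists S \<and> (\<forall>u\<in>lists S. eqv u w \<longrightarrow> length w \<le> length u)"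

definition ascent_in :: "'c set \<Rightarrow> 'c list \<Rightarrow> 'c \<Rightarrow> bool" where
  "ascent_in S w s \<longleftrightarrow> (\<forall>u\<in>lists S. eqv u (w @ [s]) \<longrightarrow> length w < length u)"

lemma reduced_inD: "reduced_in S w \<Longrightarrow> u \<in> lists S \<Longrightarrow> eqv u w \<Longrightarrow> length w \<le> length u"
  by (simp add: reduced_in_def)

lemma ascent_inD: "ascent_in S w s \<Longrightarrow> u \<in> lists S \<Longrightarrow> eqv u (w @ [s]) \<Longrightarrow> length w < length u"
  by (simp add: ascent_in_def)

lemma exists_reduced:
  assumes w: "w \<in> lists C"
  obtains u where "reduced_in C u" "eqv u w"
proof -
  obtain u where u: "u \<in> lists C \<and> eqv u w"
    and least: "\<And>y. y \<in> lists C \<and> eqv y w \<Longrightarrow> length u \<le> length y"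
    using ex_has_least_nat[of "\<lambda>u. u \<in> lists C \<and> eqv u w" w length] w by auto
  have "reduced_in C u"
    unfolding reduced_in_def using u least eqv_trans by blast
  with u that show ?thesis by blast
qed

lemma reduced_in_append:
  assumes S: "S \<subseteq> C" and red: "reduced_in S (v @ w)"
  shows "reduced_in S v" and "reduced_in S w"
proof -
  have v: "v \<in> lists S" and w: "w \<in> lists S" using red by (auto simp: reduced_in_def)
  show "reduced_in S v" unfolding reduced_in_def
  proof (intro conjI ballI impI)
    fix u assume u: "u \<in> lists S" "eqv u v"
    have "eqv (u @ w) (v @ w)" using u w S by (intro eqv_append_right) auto
    then show "length v \<le> length u" using reduced_inD[OF red, of "u @ w"] u(1) w by simp
  qed (rule v)
  show "reduced_in S w" unfolding reduced_in_def
  proof (intro conjI ballI impI)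
    fix u assume u: "u \<in> lists S" "eqv u w"
    then show "length w \<le> length u"
      using reduced_inD[OF red, of "v @ u"] v eqv_append_left[of u w v] by simp
  qed (rule w)
qed

lemma reduced_no_square:
  assumes S: "S \<subseteq> C" and red: "reduced_in S (a @ [x, x] @ b)"
  shows False
proof -
  have ab: "a @ b \<in> lists S" and "x \<in> S" using red by (auto simp: reduced_in_def)
  then have "eqv (a @ [x, x] @ b) (a @ b)" using S by (intro eqv_cancel) auto
  then show False using reduced_inD[OF red ab] eqv_sym by simp
qed

lemma last_not_ascent:
  assumes "S \<subseteq> C" "s \<in> S" "w \<in> lists S"
  shows "\<not> ascent_in S (w @ [s]) s"
proof
  assume asc: "ascent_in S (w @ [s]) s"
  have "eqv w ((w @ [s]) @ [s])" using assms eqv_cancel[of s "[]" w] by (auto intro: eqv_sym)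
  then show False using ascent_inD[OF asc assms(3)] by simp
qed

lemma reduced_ascent:
  assumes red: "reduced_in C (w @ [s])"
  shows "ascent_in C w s"
  unfolding ascent_in_def
proof (intro ballI impI)
  fix u assume "u \<in> lists C" "eqv u (w @ [s])"
  then show "length w < length u" using reduced_inD[OF red, of u] by simp
qed

lemma reduced_alt:
  assumes st: "s \<noteq> t" "s \<in> C" "t \<in> C"
  shows "reduced_in {s, t} u \<Longrightarrow> (u \<noteq> [] \<longrightarrow> last u = t) \<Longrightarrow> u = alt s t (length u)"
proof (induction u)
  case (Cons x u')
  have S: "{s, t} \<subseteq> C" using st by auto
  have IH: "u' = alt s t (length u')"
    using Cons reduced_in_append(2)[OF S, of "[x]" u'] by auto
  show ?case
  proof (cases u')
    case Nil
    then show ?thesis using Cons.prems(2) by simp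
  next
    case (Cons y u'')
    obtain m where m: "length u' = Suc m" using Cons by auto
    have y: "y = (if even m then t else s)" using IH m Cons by auto
    have "x \<noteq> y"
      using reduced_no_square[OF S, of "[]" x u''] Cons.prems(1) Cons by auto
    moreover have "x \<in> {s, t}" using Cons.prems(1) by (auto simp: reduced_in_def)
    ultimately have "x = (if even (Suc m) then t else s)" using y st by auto
    then show ?thesis using IH m by simp
  qed
qed simp

lemma alt_ascent_bound:
  assumes st: "s \<in> C" "t \<in> C" and asc: "ascent_in {s, t} (alt s t n) s"
  shows "A s t = 0 \<Longrightarrow> n \<le> 1" and "A s t = -1 \<Longrightarrow> n \<le> 2"
proof -
  have alts: "alt s t m \<in> lists {s, t}" "alt t s m \<in> lists {s, t}" for m
    by (induction m) auto
  have S: "{s, t} \<subseteq> C" using st by auto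
  show "n \<le> 1" if A0: "A s t = 0"
  proof (rule ccontr)
    assume "\<not> n \<le> 1"
    then obtain m where n: "n = Suc (Suc m)" using less_imp_Suc_add[of 1 n] by auto
    have w: "alt s t n @ [s] = alt s t m @ [s, t, s]"
      unfolding n by (simp only: alt_snoc append_assoc append_Cons append_Nil)
    have "eqv [s, t, s] [t, s, s]"
      using eqv_append_right[OF eqv_commute[OF st A0], of "[s]"] st by simp
    moreover have "eqv [t, s, s] [t]" using eqv_cancel[of s "[]" "[t]"] st by simp
    ultimately have "eqv (alt s t m @ [t]) (alt s t n @ [s])"
      unfolding w by (meson eqv_append_left eqv_sym eqv_trans)
    then show False using ascent_inD[OF asc, of "alt s t m @ [t]"] alts n by simp
  qed
  show "n \<le> 2" if A1: "A s t = -1"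
  proof (rule ccontr)
    assume "\<not> n \<le> 2"
    then obtain m where n: "n = Suc (Suc (Suc m))" using less_imp_Suc_add[of 2 n] by auto
    have w: "alt s t n @ [s] = alt t s m @ [t, s, t, s]"
      unfolding n by (simp only: alt_snoc append_assoc append_Cons append_Nil)
    have "eqv [t, s, t, s] [s, t, s, s]"
      using eqv_append_right[OF eqv_sym[OF eqv_braid[OF st A1]], of "[s]"] st by simp
    moreover have "eqv [s, t, s, s] [s, t]" using eqv_cancel[of s "[]" "[s, t]"] st by simp
    ultimately have "eqv (alt t s m @ [s, t]) (alt s t n @ [s])"
      unfolding w by (meson eqv_append_left eqv_sym eqv_trans)
    then show False using ascent_inD[OF asc, of "alt t s m @ [s, t]"] alts n by simp
  qed
qed

lemma rank_two_positivity:
  assumes st: "s \<noteq> t" "s \<in> C" "t \<in> C"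
    and red: "reduced_in {s, t} u" and asc: "ascent_in {s, t} u s"
  shows "\<exists>a b. 0 \<le> a \<and> 0 \<le> b \<and> wQ u (root s) = (\<lambda>d. a * root s d + b * root t d)"
proof -
  have S: "{s, t} \<subseteq> C" using st by auto
  have "last u = t" if "u \<noteq> []"
  proof (rule ccontr)
    assume "last u \<noteq> t"
    then have "last u = s" using red that by (auto simp: reduced_in_def dest: last_in_set)
    then have "u = butlast u @ [s]" using that by (metis append_butlast_last_id)
    moreover have "butlast u \<in> lists {s, t}" using red by (auto simp: reduced_in_def in_set_butlastD)
    ultimately show False using last_not_ascent[OF S, of s "butlast u"] asc by auto
  qed
  then have u: "u = alt s t (length u)" using reduced_alt[OF st red] by blast
  define n c where "n = length u" and "c = - A s t"
  have "0 \<le> cheb c n \<and> 0 \<le> cheb c (Suc n)"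
  proof (rule cheb_nonneg)
    have "c \<ge> 0" using A_nonpos[OF st(2,3,1)] by (simp add: c_def)
    then consider "c \<ge> 2" | "c = 0" | "c = 1" by linarith
    then show "2 \<le> c \<or> c = 0 \<and> n \<le> 1 \<or> c = 1 \<and> n \<le> 2"
      using alt_ascent_bound[OF st(2,3)] asc u by cases (auto simp: n_def c_def)
  qed
  then show ?thesis
    using wQ_alt[OF st(2,3), of c n] u by (cases "even n") (auto simp: n_def c_def)
qed

section \<open>Tits' positivity lemma and faithfulness\<close>

definition nonneg :: "('c \<Rightarrow> int) \<Rightarrow> bool" where
  "nonneg \<alpha> \<longleftrightarrow> (\<forall>d. 0 \<le> \<alpha> d)"

definition split_st :: "'c \<Rightarrow> 'c \<Rightarrow> 'c list \<Rightarrow> 'c list \<Rightarrow> 'c list \<Rightarrow> bool" where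
  "split_st s t w v u \<longleftrightarrow> v \<in> lists C \<and> u \<in> lists {s, t} \<and> eqv (v @ u) w
     \<and> length v + length u = length w"

lemma reduced_factor_length:
  assumes "reduced_in C w" "s \<in> C" "t \<in> C" "v \<in> lists C" "u \<in> lists {s, t}" "eqv (v @ u) w"
  shows "length w \<le> length v + length u"
proof -
  have "v @ u \<in> lists C" using assms(2-5) by auto
  then show ?thesis using reduced_inD[OF assms(1) _ assms(6)] by simp
qed

lemma minimal_split_reduced:
  assumes red: "reduced_in C w" and st: "s \<in> C" "t \<in> C" and split: "split_st s t w v u"
  shows "reduced_in C v" and "reduced_in {s, t} u"
proof -
  have v: "v \<in> lists C" and u: "u \<in> lists {s, t}" and E: "eqv (v @ u) w"
    and len: "length v + length u = length w"
    using split by (auto simp: split_st_def)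
  show "reduced_in C v" unfolding reduced_in_def
  proof (intro conjI ballI impI)
    fix v' assume v': "v' \<in> lists C" "eqv v' v"
    have "u \<in> lists C" using u st by auto
    then have "eqv (v' @ u) w" using eqv_trans[OF eqv_append_right[of v' v u] E] v'(2) by simp
    then show "length v \<le> length v'" using reduced_factor_length[OF red st v'(1) u] len by simp
  qed (rule v)
  show "reduced_in {s, t} u" unfolding reduced_in_def
  proof (intro conjI ballI impI)
    fix u' assume u': "u' \<in> lists {s, t}" "eqv u' u"
    have "eqv (v @ u') w" using eqv_trans[OF eqv_append_left[OF u'(2)] E] .
    then show "length u \<le> length u'" using reduced_factor_length[OF red st v u'(1)] len by simp
  qed (rule u)
qed

text \<open>Both s and t are ascents of a shortest left factor v; this uses the sign character to
  exclude words of equal length.\<close>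
lemma minimal_split_ascent:
  assumes red: "reduced_in C w" and st: "s \<in> C" "t \<in> C" and split: "split_st s t w v u"
    and least: "\<And>v' u'. split_st s t w v' u' \<Longrightarrow> length v \<le> length v'"
    and x: "x \<in> {s, t}"
  shows "ascent_in C v x"
  unfolding ascent_in_def
proof (intro ballI impI)
  fix v' assume v': "v' \<in> lists C" "eqv v' (v @ [x])"
  have v: "v \<in> lists C" and u: "u \<in> lists {s, t}" and E: "eqv (v @ u) w"
    and len: "length v + length u = length w"
    using split by (auto simp: split_st_def)
  have xC: "x \<in> C" using x st by auto
  show "length v < length v'"
  proof (rule ccontr)
    assume "\<not> length v < length v'"
    moreover have "even (length v') = odd (length v)"
      using eqv_parity[OF v'(2) v'(1)] v xC by simp
    ultimately have shorter: "length v' < length v" by presburger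
    have "eqv (v' @ [x]) (v @ [x, x])" using eqv_append_right[OF v'(2), of "[x]"] xC by simp
    moreover have "eqv (v @ [x, x]) v" using eqv_cancel[OF xC, of "[]" v] by simp
    ultimately have "eqv (v' @ [x]) v" by (rule eqv_trans)
    moreover have "u \<in> lists C" using u st by auto
    ultimately have E': "eqv (v' @ (x # u)) w"
      using eqv_trans[OF eqv_append_right[of "v' @ [x]" v u] E] by simp
    have xu: "x # u \<in> lists {s, t}" using x u by simp
    have "length w \<le> length v' + length (x # u)"
      using reduced_factor_length[OF red st v'(1) xu E'] .
    then have "split_st s t w v' (x # u)"
      using shorter len v'(1) xu E' by (simp add: split_st_def)
    then show False using least shorter by (simp add: not_le[symmetric])
  qed
qed

lemma split_ascent:
  assumes asc: "ascent_in C w s" and st: "s \<in> C" "t \<in> C" and split: "split_st s t w v u"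
  shows "ascent_in {s, t} u s"
  unfolding ascent_in_def
proof (intro ballI impI)
  fix u' assume u': "u' \<in> lists {s, t}" "eqv u' (u @ [s])"
  have v: "v \<in> lists C" and E: "eqv (v @ u) w" and len: "length v + length u = length w"
    using split by (auto simp: split_st_def)
  have "eqv (v @ u') (v @ u @ [s])" using eqv_append_left[OF u'(2)] .
  moreover have "eqv ((v @ u) @ [s]) (w @ [s])" using eqv_append_right[OF E, of "[s]"] st by simp
  ultimately have "eqv (v @ u') (w @ [s])" by (metis append_assoc eqv_trans)
  moreover have "v @ u' \<in> lists C" using v u' st by auto
  ultimately have "length w < length (v @ u')" using ascent_inD[OF asc, of "v @ u'"] by simp
  then show "length u < length u'" using len by simp
qed

text \<open>Induction on the length: if t is the last letter of w, write w ~ v u with u a word in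
  s and t and v as short as possible; apply the rank-two case to u and the induction hypothesis
  to v, for which both s and t are ascents.\<close>
lemma tits_positivity:
  "reduced_in C w \<Longrightarrow> s \<in> C \<Longrightarrow> ascent_in C w s \<Longrightarrow> nonneg (wQ w (root s))"
proof (induction "length w" arbitrary: w s rule: less_induct)
  case less
  note red = less.prems(1) and s = less.prems(2) and asc = less.prems(3)
  show ?case
  proof (cases w rule: rev_cases)
    case Nil
    then show ?thesis by (simp add: nonneg_def root_def)
  next
    case (snoc w0 t)
    have w0: "w0 \<in> lists C" and t: "t \<in> C" using red snoc by (auto simp: reduced_in_def)
    have ts: "t \<noteq> s" using last_not_ascent[of C s w0] asc snoc s w0 by auto
    have "split_st s t w w0 [t]" using snoc w0 by (simp add: split_st_def)
    then obtain v where "\<exists>u. split_st s t w v u"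
      and least_ex: "\<And>v'. (\<exists>u'. split_st s t w v' u') \<Longrightarrow> length v \<le> length v'"
      using ex_has_least_nat[of "\<lambda>v. \<exists>u. split_st s t w v u" w0 length] by blast
    then obtain u where split: "split_st s t w v u" by blast
    have least: "\<And>v' u'. split_st s t w v' u' \<Longrightarrow> length v \<le> length v'"
      using least_ex by blast
    have E: "eqv (v @ u) w" using split by (simp add: split_st_def)
    have shorter: "length v < length w" using least[OF \<open>split_st s t w w0 [t]\<close>] snoc by simp
    have nonneg_v: "nonneg (wQ v (root x))" if "x \<in> {s, t}" for x
      using less.hyps[OF shorter] minimal_split_reduced(1)[OF red s t split]
        minimal_split_ascent[OF red s t split least that] that s t by auto
    obtain a b where ab: "0 \<le> a" "0 \<le> b" and wu: "wQ u (root s) = (\<lambda>d. a * root s d + b * root t d)"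
      using rank_two_positivity[OF ts[symmetric] s t minimal_split_reduced(2)[OF red s t split]
          split_ascent[OF asc s t split]] by blast
    have "wQ w (root s) = wQ v (wQ u (root s))"
      using E root_in_lattice[OF s] by (simp add: eqv_def)
    also have "\<dots> = (\<lambda>x. a * wQ v (root s) x + b * wQ v (root t) x)"
      by (simp add: wu wQ_lin)
    finally show ?thesis using nonneg_v ab by (simp add: nonneg_def)
  qed
qed

text \<open>Faithfulness: a word acting trivially on the root lattice acts trivially on X.  Otherwise a
  shortest equivalent word is nonempty, w = u s, and Tits' lemma makes u(s) nonnegative while
  w(s) = -u(s) must equal the simple root s.\<close>
lemma faithful:
  assumes w: "w \<in> lists C" and Q: "\<forall>\<alpha>\<in>root_lattice. wQ w \<alpha> = \<alpha>"
  shows "\<forall>x\<in>X. wX w x = x"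
proof (rule ccontr)
  assume "\<not> ?thesis"
  then obtain x where x: "x \<in> X" "wX w x \<noteq> x" by blast
  obtain r where red: "reduced_in C r" and E: "eqv r w" using exists_reduced[OF w] by blast
  show False
  proof (cases r rule: rev_cases)
    case Nil
    then show False using E x by (simp add: eqv_def)
  next
    case (snoc u s)
    have s: "s \<in> C" using red snoc by (auto simp: reduced_in_def)
    have red_u: "reduced_in C u" using reduced_in_append(1)[of C u "[s]"] red snoc by simp
    have "nonneg (wQ u (root s))"
      using tits_positivity[OF red_u s] reduced_ascent red snoc by simp
    have "reflect s (root s) = (\<lambda>d. - root s d)"
      using reflect_plane(1)[OF s s, of 1 0] A_diag[OF s] by simp
    then have neg: "wQ r (root s) = (\<lambda>d. - wQ u (root s) d)"
      using snoc by (simp add: wQ_uminus)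
    have fixed: "wQ r (root s) = root s"
      using E Q root_in_lattice[OF s] by (simp add: eqv_def)
    have "- wQ u (root s) s = 1"
      using fun_cong[OF trans[OF neg[symmetric] fixed], of s] by (simp add: root_def)
    moreover have "0 \<le> wQ u (root s) s" using \<open>nonneg (wQ u (root s))\<close> by (simp add: nonneg_def)
    ultimately show False by simp
  qed
qed

lemma factors_through_reflections:
  "\<exists>\<rho>. \<forall>ws\<in>lists C. \<rho> (restrict (wQ ws) root_lattice) = restrict (wX ws) X"
proof -
  have same: "restrict (wX us) X = restrict (wX ws) X"
    if us: "us \<in> lists C" and ws: "ws \<in> lists C"
      and eq: "restrict (wQ us) root_lattice = restrict (wQ ws) root_lattice" for us ws
  proof -
    have rw: "rev ws @ us \<in> lists C" using ws us by auto
    have "wQ (rev ws) (wQ us \<alpha>) = \<alpha>" if "\<alpha> \<in> root_lattice" for \<alpha>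
      using fun_cong[OF eq, of \<alpha>] that wQ_rev[OF ws that] by simp
    then have "\<forall>\<alpha>\<in>root_lattice. wQ (rev ws @ us) \<alpha> = \<alpha>" by simp
    then have triv: "\<forall>x\<in>X. wX (rev ws) (wX us x) = x" using faithful[OF rw] by simp
    have "wX us x = wX ws x" if x: "x \<in> X" for x
    proof -
      have "wX us x = wX (rev (rev ws)) (wX (rev ws) (wX us x))"
        using word_action_rev[of C X act "rev ws" "wX us x", OF act_closed act_invol] ws
          word_action_closed[of C X act, OF act_closed us x]
        by (simp add: in_lists_conv_set)
      then show ?thesis using triv x by simp
    qed
    then show ?thesis by (auto simp: restrict_def)
  qed
  define \<rho> where "\<rho> F = restrict (wX (SOME us. us \<in> lists C \<and> restrict (wQ us) root_lattice = F)) X"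
    for F
  have "\<rho> (restrict (wQ ws) root_lattice) = restrict (wX ws) X" if ws: "ws \<in> lists C" for ws
    unfolding \<rho>_def using someI[of "\<lambda>us. us \<in> lists C \<and> restrict (wQ us) root_lattice =
        restrict (wQ ws) root_lattice" ws] ws same by blast
  then show ?thesis by blast
qed

end

section \<open>The data P\<close>

lemma finite_TP: "finite (TP p k)"
proof -
  have "TP p k \<subseteq> {f. \<forall>x. (x \<in> {..p} \<longrightarrow> f x \<in> {..sum k {..p}}) \<and> (x \<notin> {..p} \<longrightarrow> f x = 0)}"
  proof
    fix t assume "t \<in> TP p k"
    moreover have "\<forall>i\<le>p. k i \<le> sum k {..p}" by (auto intro: member_le_sum)
    ultimately show "t \<in> {f. \<forall>x. (x \<in> {..p} \<longrightarrow> f x \<in> {..sum k {..p}}) \<and> (x \<notin> {..p} \<longrightarrow> f x = 0)}"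
      by (auto simp: TP_def intro: order_trans)
  qed
  then show ?thesis by (rule finite_subset) (rule finite_set_of_finite_funs, auto)
qed

lemma finite_CP: "finite (CP p k l)"
proof -
  have "{CR i j s | i j s. i \<le> p \<and> 1 \<le> j \<and> j \<le> k i \<and> 1 \<le> s \<and> s \<le> l i j - 1}
     \<subseteq> (\<lambda>(i, j, s). CR i j s) ` (SIGMA i:{..p}. SIGMA j:{..k i}. {..l i j})" by force
  then show ?thesis unfolding CP_def using finite_TP
    by (meson finite_SigmaI finite_atMost finite_Un finite_imageI finite_subset)
qed

text \<open>The maps sigma(c) on R(P) are affine pseudo-reflections nu |-> nu + lambda_c(nu) v_c with
  amplitude lambda_(c_t)(nu) = 1 - nu(t), lambda_(c(i,j,s))(nu) = nu_(i,j,s) - nu_(i,j,s+1)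
  and the following direction vectors v_c.\<close>
fun amplitude :: "nat \<Rightarrow> gen \<Rightarrow> (nat \<Rightarrow> nat \<Rightarrow> nat \<Rightarrow> 'k::field) \<Rightarrow> 'k" where
  "amplitude p (CT t) \<nu> = 1 - nu_t p \<nu> t"
| "amplitude p (CR i j s) \<nu> = \<nu> i j s - \<nu> i j (s + 1)"

fun direction :: "nat \<Rightarrow> (nat \<Rightarrow> nat) \<Rightarrow> (nat \<Rightarrow> nat \<Rightarrow> nat) \<Rightarrow> (nat \<Rightarrow> nat \<Rightarrow> nat \<Rightarrow> nat)
     \<Rightarrow> gen \<Rightarrow> (nat \<Rightarrow> nat \<Rightarrow> nat \<Rightarrow> 'k::field)" where
  "direction p k l e (CT t) = (\<lambda>i j s. if vidx p k l i j s then
        (if i = 0 then (if j = t 0 \<and> s = 1 then 2 else 1 - of_nat (e 0 j (t 0)))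
         else (if j = t i \<and> s = 1 then 0 else - (of_nat (e i j (t i)) + 1))) else 0)"
| "direction p k l e (CR i j s) = (\<lambda>i' j' s'. if i' = i \<and> j' = j \<and> s' = s + 1 then 1
        else if i' = i \<and> j' = j \<and> s' = s then -1 else 0)"

lemma actR_affine_form:
  "actR p k l e c \<nu> = (\<lambda>i j s. \<nu> i j s + amplitude p c \<nu> * direction p k l e c i j s)"
  by (cases c) (auto simp: fun_eq_iff algebra_simps)

lemma sum_sign_first: "(\<Sum>i\<le>p. (if i = 0 then 1 else -1 :: int)) = 1 - int p"
  by (induction p) auto

lemma sum_indicator_card: "(\<Sum>i\<le>(p::nat). (if P i then 1 else 0 :: int)) = int (card {i. i \<le> p \<and> P i})"
proof -
  have "{i\<in>{..p}. P i} = {i. i \<le> p \<and> P i}" by auto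
  then show ?thesis using sum.inter_filter[of "{..p}" "\<lambda>_. 1::int" P] by simp
qed

locale data_P =
  fixes p :: nat and k :: "nat \<Rightarrow> nat" and l :: "nat \<Rightarrow> nat \<Rightarrow> nat"
    and e :: "nat \<Rightarrow> nat \<Rightarrow> nat \<Rightarrow> nat"
  assumes valid: "valid_data p k l e"
begin

lemma e_sym: "i \<le> p \<Longrightarrow> j \<in> {1..k i} \<Longrightarrow> j' \<in> {1..k i} \<Longrightarrow> e i j j' = e i j' j"
  and e_diag: "i \<le> p \<Longrightarrow> j \<in> {1..k i} \<Longrightarrow> e i j j = 0"
  and e_pos: "i \<le> p \<Longrightarrow> j \<in> {1..k i} \<Longrightarrow> j' \<in> {1..k i} \<Longrightarrow> j \<noteq> j' \<Longrightarrow> 1 \<le> e i j j'"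
  and l_pos: "i \<le> p \<Longrightarrow> j \<in> {1..k i} \<Longrightarrow> 1 \<le> l i j"
  using valid by (auto simp: valid_data_def)

lemma TP_D: "t \<in> TP p k \<Longrightarrow> i \<le> p \<Longrightarrow> t i \<in> {1..k i}"
  by (auto simp: TP_def)

lemma CR_in_CP: "CR i j s \<in> CP p k l \<longleftrightarrow> i \<le> p \<and> 1 \<le> j \<and> j \<le> k i \<and> 1 \<le> s \<and> s \<le> l i j - 1"
  and CT_in_CP: "CT t \<in> CP p k l \<longleftrightarrow> t \<in> TP p k"
  by (auto simp: CP_def)

lemma pairing_sym: "c \<in> CP p k l \<Longrightarrow> d \<in> CP p k l \<Longrightarrow> pairing p e c d = pairing p e d c"
proof (cases c; cases d)
  fix t t' assume "c \<in> CP p k l" "d \<in> CP p k l" "c = CT t" "d = CT t'"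
  then have t: "t \<in> TP p k" "t' \<in> TP p k" by (auto simp: CT_in_CP)
  have "(\<Sum>i\<le>p. int (e i (t i) (t' i))) = (\<Sum>i\<le>p. int (e i (t' i) (t i)))"
    using e_sym TP_D t by (intro sum.cong) auto
  moreover have "{i. i \<le> p \<and> t i = t' i} = {i. i \<le> p \<and> t' i = t i}" by auto
  ultimately show ?thesis using \<open>c = CT t\<close> \<open>d = CT t'\<close> by simp
qed auto

lemma pairing_diag: "c \<in> CP p k l \<Longrightarrow> pairing p e c c = 2"
proof (cases c)
  case (CT t)
  assume "c \<in> CP p k l"
  then have t: "t \<in> TP p k" using CT by (auto simp: CT_in_CP)
  have "(\<Sum>i\<le>p. int (e i (t i) (t i))) = 0" using e_diag TP_D t by (intro sum.neutral) auto
  moreover have "{i. i \<le> p \<and> t i = t i} = {..p}" by auto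
  ultimately show ?thesis using CT by simp
qed auto

text \<open>Distinct c_t, c_t' pair nonpositively: each index with t_i \<noteq> t'_i contributes e_i >= 1
  to the sum and removes one from the count of agreements.\<close>
lemma pairing_nonpos:
  assumes c: "c \<in> CP p k l" and d: "d \<in> CP p k l" and cd: "c \<noteq> d"
  shows "pairing p e c d \<le> 0"
proof (cases c; cases d)
  fix t t' assume ct: "c = CT t" "d = CT t'"
  then have t: "t \<in> TP p k" "t' \<in> TP p k" using c d by (auto simp: CT_in_CP)
  define D where "D = (\<Sum>i\<le>p. (if t i = t' i then 0 else 1 :: int))"
  obtain i0 where i0: "i0 \<le> p" "t i0 \<noteq> t' i0"
    using t cd ct by (auto simp: TP_def fun_eq_iff) (metis not_le)
  have D1: "D \<ge> 1"
    using member_le_sum[of i0 "{..p}" "\<lambda>i. if t i = t' i then 0 else 1 :: int"] i0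
    by (simp add: D_def)
  have eD: "D \<le> (\<Sum>i\<le>p. int (e i (t i) (t' i)))"
    unfolding D_def using e_pos TP_D[OF t(1)] TP_D[OF t(2)] by (intro sum_mono) auto
  have "(\<Sum>i\<le>p. (if t i = t' i then 1 else 0 :: int)) + D = (\<Sum>i\<le>p. (1::int))"
    unfolding D_def sum.distrib[symmetric] by (intro sum.cong) auto
  then have "int (card {i. i \<le> p \<and> t i = t' i}) = int p + 1 - D" by (simp add: sum_indicator_card)
  then show ?thesis using ct eD D1 by simp
qed (use cd in auto)

end

sublocale data_P \<subseteq> cartan_matrix "CP p k l" "pairing p e"
  using finite_CP pairing_diag pairing_sym pairing_nonpos by unfold_locales

context data_P
begin

lemma wordQ_eq: "wordQ p k l e ws = restrict (wQ ws) root_lattice"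
proof -
  have "reflQ p k l e = reflect"
    by (simp add: fun_eq_iff reflQ_def reflect_def pairQ_def cpair_def)
  moreover have "QP p k l = root_lattice" by (simp add: QP_def root_lattice_def)
  ultimately show ?thesis by (simp add: wordQ_def word_action_def)
qed

lemma direction_CT_sum:
  assumes t: "t \<in> TP p k" and t': "t' \<in> TP p k"
  shows "(\<Sum>i\<le>p. direction p k l e (CT t) i (t' i) 1 :: 'k::field) = of_int (pairing p e (CT t) (CT t'))"
proof -
  define g where "g i = (if i = 0 then 1 else -1) - int (e i (t i) (t' i)) + (if t i = t' i then 1 else 0)"
    for i
  have "direction p k l e (CT t) i (t' i) 1 = (of_int (g i) :: 'k)" if i: "i \<le> p" for i
  proof -
    have "vidx p k l i (t' i) 1" using TP_D[OF t' i] l_pos[OF i TP_D[OF t' i]] i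
      by (auto simp: vidx_def)
    moreover have "e i (t' i) (t i) = e i (t i) (t' i)" using e_sym[OF i TP_D[OF t' i] TP_D[OF t i]] .
    moreover have "t i = t' i \<Longrightarrow> e i (t i) (t' i) = 0" using e_diag[OF i TP_D[OF t i]] by simp
    ultimately show ?thesis by (auto simp: g_def)
  qed
  then have "(\<Sum>i\<le>p. direction p k l e (CT t) i (t' i) 1 :: 'k) = of_int (\<Sum>i\<le>p. g i)" by simp
  also have "(\<Sum>i\<le>p. g i) = (1 - int p) - (\<Sum>i\<le>p. int (e i (t i) (t' i)))
      + int (card {i. i \<le> p \<and> t i = t' i})"
    by (simp add: g_def sum.distrib sum_subtractf sum_sign_first sum_indicator_card)
  finally show ?thesis by simp
qed

lemma amplitude_shift:
  assumes c: "c \<in> CP p k l" and d: "d \<in> CP p k l"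
  shows "amplitude p d (\<lambda>i j s. \<nu> i j s + a * direction p k l e c i j s)
       = amplitude p d \<nu> - a * of_int (pairing p e c d)"
proof (cases d)
  case (CT t')
  have t': "t' \<in> TP p k" using d CT by (simp add: CT_in_CP)
  have S: "(\<Sum>i\<le>p. direction p k l e c i (t' i) 1 :: 'a) = of_int (pairing p e c (CT t'))"
  proof (cases c)
    case (CT t)
    then show ?thesis using direction_CT_sum[OF _ t'] c by (simp add: CT_in_CP)
  next
    case (CR i j s)
    have "i \<le> p" "1 \<le> s" using c CR by (auto simp: CR_in_CP)
    then have "(\<Sum>i'\<le>p. direction p k l e c i' (t' i') 1 :: 'a)
        = (\<Sum>i'\<le>p. if i' = i then (if t' i = j \<and> s = 1 then -1 else 0) else 0)"
      using CR by (intro sum.cong) auto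
    then show ?thesis using CR \<open>i \<le> p\<close> by (simp add: sum.delta)
  qed
  have "amplitude p d (\<lambda>i j s. \<nu> i j s + a * direction p k l e c i j s)
      = 1 - (nu_t p \<nu> t' + a * (\<Sum>i\<le>p. direction p k l e c i (t' i) 1))"
    using CT by (simp add: nu_t_def sum.distrib sum_distrib_left)
  then show ?thesis using S CT by (simp add: algebra_simps)
next
  case (CR i' j' s')
  have d': "i' \<le> p" "1 \<le> j'" "j' \<le> k i'" "1 \<le> s'" "s' \<le> l i' j' - 1"
    using d CR by (auto simp: CR_in_CP)
  have "direction p k l e c i' j' s' - direction p k l e c i' j' (s' + 1)
      = - (of_int (pairing p e c d) :: 'a)"
  proof (cases c)
    case (CT t)
    have "vidx p k l i' j' s'" "vidx p k l i' j' (s' + 1)" using d' by (auto simp: vidx_def)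
    moreover have "e i' (t i') (t i') = 0"
      using c CT e_diag[OF d'(1) TP_D[OF _ d'(1)]] by (simp add: CT_in_CP)
    ultimately show ?thesis using CT CR d'(4) by auto
  qed (use CR in auto)
  moreover have "amplitude p d (\<lambda>i j s. \<nu> i j s + a * direction p k l e c i j s)
      = amplitude p d \<nu> + a * (direction p k l e c i' j' s' - direction p k l e c i' j' (s' + 1))"
    using CR by (simp add: algebra_simps)
  ultimately show ?thesis by simp
qed

lemma actR_affine:
  "affine_reflections (actR p k l e) (amplitude p) (direction p k l e :: gen \<Rightarrow> (nat \<Rightarrow> nat \<Rightarrow> nat \<Rightarrow> 'k::field))
     (\<lambda>\<nu> a u. \<lambda>i j s. \<nu> i j s + a * u i j s) (\<lambda>c d. of_int (pairing p e c d)) (CP p k l)"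
  by unfold_locales
    (auto simp: actR_affine_form amplitude_shift algebra_simps pairing_diag pairing_sym)

lemma actR_closed:
  assumes c: "c \<in> CP p k l" and \<nu>: "\<nu> \<in> RP p k l"
  shows "actR p k l e c \<nu> \<in> RP p k l"
proof -
  have "direction p k l e c i j s = (0::'a)" if "\<not> vidx p k l i j s" for i j s
  proof (cases c)
    case (CR i0 j0 s0)
    then show ?thesis using that c by (auto simp: vidx_def CR_in_CP)
  qed (use that in auto)
  then show ?thesis using \<nu> unfolding RP_def by (auto simp: actR_affine_form)
qed

lemma actR_cartan_action:
  "cartan_action (CP p k l) (pairing p e) (actR p k l e) (RP p k l :: (nat \<Rightarrow> nat \<Rightarrow> nat \<Rightarrow> 'k::field) set)"
proof -
  interpret R: affine_reflections "actR p k l e" "amplitude p"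
    "direction p k l e :: gen \<Rightarrow> (nat \<Rightarrow> nat \<Rightarrow> nat \<Rightarrow> 'k)" "\<lambda>\<nu> a u. \<lambda>i j s. \<nu> i j s + a * u i j s"
    "\<lambda>c d. of_int (pairing p e c d)" "CP p k l"
    by (rule actR_affine)
  show ?thesis
    by unfold_locales (auto intro: actR_closed R.invol R.commute R.braid)
qed

end

theorem mainTheorem9:
  fixes p :: nat and k :: "nat \<Rightarrow> nat" and l :: "nat \<Rightarrow> nat \<Rightarrow> nat"
    and e :: "nat \<Rightarrow> nat \<Rightarrow> nat \<Rightarrow> nat"
  assumes "valid_data p k l e"
  shows "\<exists>\<rho> :: ((gen \<Rightarrow> int) \<Rightarrow> (gen \<Rightarrow> int)) \<Rightarrow> ((nat \<Rightarrow> nat \<Rightarrow> nat \<Rightarrow> 'k::field_char_0) \<Rightarrow> (nat \<Rightarrow> nat \<Rightarrow> nat \<Rightarrow> 'k)).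
           \<forall>ws \<in> lists (CP p k l). \<rho> (wordQ p k l e ws) = wordR p k l e ws"
proof -
  interpret data_P p k l e by unfold_locales (rule assms)
  interpret cartan_action "CP p k l" "pairing p e" "actR p k l e"
    "RP p k l :: (nat \<Rightarrow> nat \<Rightarrow> nat \<Rightarrow> 'k) set"
    by (rule actR_cartan_action)
  have "wordR p k l e ws = restrict (wX ws) (RP p k l)" for ws :: "gen list"
    by (simp add: wordR_def word_action_def)
  then show ?thesis using factors_through_reflections by (simp add: wordQ_eq)
qed

end
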